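(* Let $U$ be a finite set of attributes, $\varphi$ a standard closure operator on $U$, and $X\subseteq U$. Let $\mathrm{WCD}(Y,\Sigma)$ denote the output of the algorithm WildClosureDirect described below on input set $Y\subseteq U$ and implication set $\Sigma$, and let $\Sigma(Z)$ denote the closure of $Z$ with respect to $\Sigma$. (i) If $\Sigma$ is the canonical direct unit basis of $\varphi$, then $\mathrm{WCD}(X,\Sigma)=\Sigma(X)$. (ii) If $\Sigma$ is the D-basis of $\varphi$, then $\mathrm{WCD}(\varphi_0(X),\Sigma)=\Sigma(\varphi_0(X))$.
   Context: An implication over $U$ is a pair $A\to B$ with $A,B\subseteq U$; the closure $\Sigma(Z)$ w.r.t. a set of implications $\Sigma$ is the smallest superset of $Z$ that contains $B$ whenever it contains $A$, for each $A\to B\in\Sigma$. A closure operator $\varphi$ on $U$ is standard if for every $a\in U$ the set $\varphi(a)\setminus\{a\}$ is closed, and $\varphi(a)\neq\varphi(b)$ for $a\neq b$. For $c\in U$, $A\subseteq U$ is a minimal generator of $c$ if $c\in\varphi(A)$, $c\notin A$, and no proper subset $A'\subsetneq A$ has $c\in\varphi(A')$. Canonical direct unit basis: $\{A\to c \mid c\in U,\ A \text{ a minimal generator of } c\}$. D-basis: let $\Sigma_0=\{a\to c\mid a,c\in U,\ c\in\varphi(a)\setminus\{a\}\}$ and $\varphi_0(X)$ the closure of $X$ w.r.t. $\Sigma_0$. A minimal generator $A$ of $c$ with $|A|\ge2$ is a minimal D-generator of $c$ if $c\notin\varphi_0(A)$ and for every minimal generator $A'$ of $c$, $A'\subseteq\varphi_0(A)$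 implies $A'=A$. The D-basis is $\Sigma_0\cup\{A\to c\mid c\in U,\ A\text{ a minimal D-generator of }c\}$. In both bases, implications with equal left-hand side may be merged into a single implication whose right-hand side is the union. Algorithm WildClosureDirect on input $(Y,\Sigma)$: for each $m\in U$ let $list[m]$ be the set of implications $A\to B\in\Sigma$ with $m\in A$. Compute $\Sigma_1:=\bigcup_{m\in U\setminus Y} list[m]$ (this set is fixed once computed). For each $A\to B\in\Sigma\setminus\Sigma_1$, set $Y:=Y\cup B$. Return $Y$. *)

theory Defs
  imports Main
begin

type_synonym 'a impl = "'a set \<times> 'a set"
type_synonym 'a unit_impl = "'a set \<times> 'a"

definition imp_closure :: "'a impl set \<Rightarrow> 'a set \<Rightarrow> 'a set" where
  "imp_closure Ss Z = \<Inter>{W. Z \<subseteq> W \<and> (\<forall>(A, B) \<in> Ss. A \<subseteq> W \<longrightarrow> B \<subseteq> W)}"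

definition to_impls :: "'a unit_impl set \<Rightarrow> 'a impl set" where
  "to_impls S = {(A, {c}) | A c. (A, c) \<in> S}"

definition closure_op :: "'a set \<Rightarrow> ('a set \<Rightarrow> 'a set) \<Rightarrow> bool" where
  "closure_op U phi \<longleftrightarrow>
     (\<forall>X. X \<subseteq> U \<longrightarrow> X \<subseteq> phi X \<and> phi X \<subseteq> U) \<and>
     (\<forall>X Y. X \<subseteq> Y \<and> Y \<subseteq> U \<longrightarrow> phi X \<subseteq> phi Y) \<and>
     (\<forall>X. X \<subseteq> U \<longrightarrow> phi (phi X) = phi X)"

definition standard_op :: "'a set \<Rightarrow> ('a set \<Rightarrow> 'a set) \<Rightarrow> bool" where
  "standard_op U phi \<longleftrightarrow>
     (\<forall>a \<in> U. phi (phi {a} - {a}) = phi {a} - {a}) \<and>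
     (\<forall>a \<in> U. \<forall>b \<in> U. a \<noteq> b \<longrightarrow> phi {a} \<noteq> phi {b})"

definition min_gen :: "'a set \<Rightarrow> ('a set \<Rightarrow> 'a set) \<Rightarrow> 'a \<Rightarrow> 'a set \<Rightarrow> bool" where
  "min_gen U phi c A \<longleftrightarrow> A \<subseteq> U \<and> c \<in> phi A \<and> c \<notin> A \<and> (\<forall>A'. A' \<subset> A \<longrightarrow> c \<notin> phi A')"

definition canonical_direct_unit_basis :: "'a set \<Rightarrow> ('a set \<Rightarrow> 'a set) \<Rightarrow> 'a unit_impl set" where
  "canonical_direct_unit_basis U phi = {(A, c) | A c. c \<in> U \<and> min_gen U phi c A}"

definition sigma0 :: "'a set \<Rightarrow> ('a set \<Rightarrow> 'a set) \<Rightarrow> 'a unit_impl set" where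
  "sigma0 U phi = {({a}, c) | a c. a \<in> U \<and> c \<in> U \<and> c \<in> phi {a} - {a}}"

definition phi0 :: "'a set \<Rightarrow> ('a set \<Rightarrow> 'a set) \<Rightarrow> 'a set \<Rightarrow> 'a set" where
  "phi0 U phi X = imp_closure (to_impls (sigma0 U phi)) X"

definition min_D_gen :: "'a set \<Rightarrow> ('a set \<Rightarrow> 'a set) \<Rightarrow> 'a \<Rightarrow> 'a set \<Rightarrow> bool" where
  "min_D_gen U phi c A \<longleftrightarrow> min_gen U phi c A \<and> card A \<ge> 2 \<and> c \<notin> phi0 U phi A \<and>
     (\<forall>A'. min_gen U phi c A' \<and> A' \<subseteq> phi0 U phi A \<longrightarrow> A' = A)"

definition D_basis :: "'a set \<Rightarrow> ('a set \<Rightarrow> 'a set) \<Rightarrow> 'a unit_impl set" where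
  "D_basis U phi = sigma0 U phi \<union> {(A, c) | A c. c \<in> U \<and> min_D_gen U phi c A}"

text \<open>Ss is obtained from the unit basis S by merging implications with equal left-hand
  side (any partition of the right-hand sides sharing a left-hand side; no merging = singletons).\<close>
definition merged_form :: "'a unit_impl set \<Rightarrow> 'a impl set \<Rightarrow> bool" where
  "merged_form S Ss \<longleftrightarrow>
     (\<forall>(A, C) \<in> Ss. C \<noteq> {} \<and> (\<forall>c \<in> C. (A, c) \<in> S)) \<and>
     (\<forall>(A, c) \<in> S. \<exists>C. (A, C) \<in> Ss \<and> c \<in> C) \<and>
     (\<forall>(A, C) \<in> Ss. \<forall>(A', C') \<in> Ss. A = A' \<longrightarrow> C = C' \<or> C \<inter> C' = {})"

text \<open>Algorithm WildClosureDirect. Since Ss1 is fixed once computed, the loop adds the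
  right-hand sides of all implications of Ss \ Ss1 to Y.\<close>
definition impl_list :: "'a impl set \<Rightarrow> 'a \<Rightarrow> 'a impl set" where
  "impl_list Ss m = {(A, B) \<in> Ss. m \<in> A}"

definition WCD :: "'a set \<Rightarrow> 'a set \<Rightarrow> 'a impl set \<Rightarrow> 'a set" where
  "WCD U Y Ss =
     (let Ss1 = (\<Union>m \<in> U - Y. impl_list Ss m)
      in Y \<union> \<Union>{B. \<exists>A. (A, B) \<in> Ss - Ss1})"

end

theory Submission
  imports Defs
begin

(* WildClosureDirect makes a single pass: it fires exactly the implications whose premise already
   lies in Y.  For a sound basis this yields the full closure phi Y as soon as every c in phi Y - Y
   is the conclusion of a basis implication with premise inside Y.  For the canonical direct unit
   basis this holds because c has a minimal generator inside Y.  For the D-basis and Y closed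
   under phi0, take a minimal generator A of c inside Y whose phi0-closure has least cardinality:
   it is a minimal D-generator, because by standardness a minimal generator is recovered as the
   set of maximal elements of its phi0-closure (ordered by a <= b iff a in phi {b}). *)

lemma imp_closure_subset: "Z \<subseteq> imp_closure Ss Z"
  unfolding imp_closure_def by blast

lemma imp_closure_least:
  "Z \<subseteq> W \<Longrightarrow> (\<forall>(A, B) \<in> Ss. A \<subseteq> W \<longrightarrow> B \<subseteq> W) \<Longrightarrow> imp_closure Ss Z \<subseteq> W"
  unfolding imp_closure_def by blast

lemma imp_closure_closed:
  assumes "(A, B) \<in> Ss" and "A \<subseteq> imp_closure Ss Z"
  shows "B \<subseteq> imp_closure Ss Z"
  using assms unfolding imp_closure_def by blast

lemma imp_closure_subset_closure:
  assumes "A \<subseteq> imp_closure Ss Z"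
  shows "imp_closure Ss A \<subseteq> imp_closure Ss Z"
proof (rule imp_closure_least)
  show "\<forall>(A, B) \<in> Ss. A \<subseteq> imp_closure Ss Z \<longrightarrow> B \<subseteq> imp_closure Ss Z"
    using imp_closure_closed by blast
qed (rule assms)

lemma closure_op_extensive: "closure_op U phi \<Longrightarrow> X \<subseteq> U \<Longrightarrow> X \<subseteq> phi X"
  and closure_op_range: "closure_op U phi \<Longrightarrow> X \<subseteq> U \<Longrightarrow> phi X \<subseteq> U"
  and closure_op_mono: "closure_op U phi \<Longrightarrow> X \<subseteq> Y \<Longrightarrow> Y \<subseteq> U \<Longrightarrow> phi X \<subseteq> phi Y"
  and closure_op_idem: "closure_op U phi \<Longrightarrow> X \<subseteq> U \<Longrightarrow> phi (phi X) = phi X"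
  unfolding closure_op_def by meson+

lemma closure_op_subset_closure:
  assumes "closure_op U phi" and "Y \<subseteq> U" and "A \<subseteq> phi Y"
  shows "phi A \<subseteq> phi Y"
  using closure_op_mono[OF assms(1,3) closure_op_range[OF assms(1,2)]]
    closure_op_idem[OF assms(1,2)] by simp

lemma phi0_range: "X \<subseteq> U \<Longrightarrow> phi0 U phi X \<subseteq> U"
  unfolding phi0_def by (rule imp_closure_least) (auto simp: to_impls_def sigma0_def)

lemma phi0_extensive: "X \<subseteq> phi0 U phi X"
  unfolding phi0_def by (rule imp_closure_subset)

lemma phi0_subset_phi0: "A \<subseteq> phi0 U phi X \<Longrightarrow> phi0 U phi A \<subseteq> phi0 U phi X"
  unfolding phi0_def by (rule imp_closure_subset_closure)

lemma phi0_eq_UN: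
  assumes cl: "closure_op U phi" and AU: "A \<subseteq> U"
  shows "phi0 U phi A = (\<Union>a \<in> A. phi {a})"
proof
  show "phi0 U phi A \<subseteq> (\<Union>a \<in> A. phi {a})"
    unfolding phi0_def
  proof (rule imp_closure_least)
    show "A \<subseteq> (\<Union>a \<in> A. phi {a})"
      using AU closure_op_extensive[OF cl, of "{_}"] by blast
    show "\<forall>(B, C) \<in> to_impls (sigma0 U phi).
        B \<subseteq> (\<Union>a \<in> A. phi {a}) \<longrightarrow> C \<subseteq> (\<Union>a \<in> A. phi {a})"
    proof (clarsimp simp: to_impls_def sigma0_def)
      fix a b c assume "a \<in> A" "b \<in> phi {a}" "c \<in> phi {b}"
      then have "c \<in> phi {a}"
        using AU closure_op_subset_closure[OF cl, of "{a}" "{b}"] by blast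
      then show "\<exists>a \<in> A. c \<in> phi {a}" using \<open>a \<in> A\<close> by blast
    qed
  qed
next
  have "x \<in> phi0 U phi A" if "a \<in> A" "x \<in> phi {a}" "x \<noteq> a" for a x
  proof -
    have "a \<in> U" using that AU by blast
    then have "x \<in> U" using that closure_op_range[OF cl, of "{a}"] by blast
    then have "({a}, {x}) \<in> to_impls (sigma0 U phi)"
      using that \<open>a \<in> U\<close> unfolding to_impls_def sigma0_def by auto
    moreover have "{a} \<subseteq> phi0 U phi A"
      using that imp_closure_subset[of A] unfolding phi0_def by blast
    ultimately show ?thesis
      unfolding phi0_def using imp_closure_closed by (metis insert_subset)
  qed
  then show "(\<Union>a \<in> A. phi {a}) \<subseteq> phi0 U phi A"
    using imp_closure_subset[of A] unfolding phi0_def by blast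
qed

lemma standard_op_empty:
  assumes cl: "closure_op U phi" and st: "standard_op U phi"
  shows "phi {} = {}"
proof (rule ccontr)
  assume "phi {} \<noteq> {}"
  then obtain a where a: "a \<in> phi {}" by blast
  then have "a \<in> U" using closure_op_range[OF cl] by blast
  then have "phi {} \<subseteq> phi (phi {a} - {a})"
    using closure_op_mono[OF cl, of "{}"] closure_op_range[OF cl, of "{a}"] by blast
  also have "\<dots> = phi {a} - {a}"
    using st \<open>a \<in> U\<close> unfolding standard_op_def by blast
  finally show False using a by blast
qed

lemma standard_op_antisym:
  assumes cl: "closure_op U phi" and st: "standard_op U phi"
    and "a \<in> U" "b \<in> U" "a \<in> phi {b}" "b \<in> phi {a}"
  shows "a = b"
proof -
  have "phi {a} \<subseteq> phi {b}" and "phi {b} \<subseteq> phi {a}"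
    using assms(3-6) closure_op_subset_closure[OF cl, of "{b}" "{a}"]
      closure_op_subset_closure[OF cl, of "{a}" "{b}"] by simp_all
  then have "phi {a} = phi {b}" by (rule subset_antisym)
  then show ?thesis using st assms(3,4) unfolding standard_op_def by blast
qed

lemma min_gen_exists:
  assumes "finite U" and "Y \<subseteq> U" and "c \<in> phi Y" and "c \<notin> Y"
  shows "\<exists>A \<subseteq> Y. min_gen U phi c A"
proof -
  obtain A where A: "A \<subseteq> Y" "c \<in> phi A"
    and least: "\<And>B. B \<subseteq> Y \<Longrightarrow> c \<in> phi B \<Longrightarrow> card A \<le> card B"
    using ex_has_least_nat[of "\<lambda>A. A \<subseteq> Y \<and> c \<in> phi A" Y card] assms(3) by auto
  have "finite A" using A(1) assms(1,2) by (meson finite_subset subset_trans)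
  then have "c \<notin> phi A'" if "A' \<subset> A" for A'
    using that A(1) least[of A'] psubset_card_mono[of A A'] by auto
  then show ?thesis
    using A assms(2,4) unfolding min_gen_def by blast
qed

text \<open>An element of A below another one could be dropped without losing c.\<close>

lemma min_gen_antichain:
  assumes cl: "closure_op U phi" and mg: "min_gen U phi c A"
    and "a \<in> A" "b \<in> A" "a \<in> phi {b}"
  shows "a = b"
proof (rule ccontr)
  assume "a \<noteq> b"
  have AU: "A - {a} \<subseteq> U" using mg unfolding min_gen_def by blast
  have "A \<subseteq> phi (A - {a})"
    using assms \<open>a \<noteq> b\<close> closure_op_extensive[OF cl AU] closure_op_mono[OF cl, of "{b}" "A - {a}"] AU
    by blast
  then have "c \<in> phi (A - {a})"
    using mg closure_op_subset_closure[OF cl AU] unfolding min_gen_def by blast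
  then show False using mg \<open>a \<in> A\<close> unfolding min_gen_def by blast
qed

lemma min_gen_eq_maximal_phi0:
  assumes cl: "closure_op U phi" and st: "standard_op U phi" and mg: "min_gen U phi c A"
  shows "A = {a \<in> phi0 U phi A. \<forall>x \<in> phi0 U phi A. a \<in> phi {x} \<longrightarrow> x = a}"
proof -
  have AU: "A \<subseteq> U" using mg unfolding min_gen_def by blast
  note phi0_A = phi0_eq_UN[OF cl AU]
  have A_phi0: "a \<in> phi0 U phi A" if "a \<in> A" for a
    using that AU closure_op_extensive[OF cl, of "{a}"] unfolding phi0_A by blast
  show ?thesis
  proof (intro equalityI subsetI CollectI conjI ballI impI)
    fix a assume a: "a \<in> A"
    then show "a \<in> phi0 U phi A" by (rule A_phi0)
    fix x assume "x \<in> phi0 U phi A" and ax: "a \<in> phi {x}"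
    then obtain b where b: "b \<in> A" "x \<in> phi {b}" unfolding phi0_A by blast
    have "b \<in> U" "x \<in> U" "a \<in> U" using a b AU closure_op_range[OF cl, of "{b}"] by blast+
    then have "a \<in> phi {b}"
      using ax b(2) closure_op_subset_closure[OF cl, of "{b}" "{x}"] by blast
    then have "a = b" using min_gen_antichain[OF cl mg a b(1)] by blast
    then show "x = a"
      using standard_op_antisym[OF cl st \<open>x \<in> U\<close> \<open>a \<in> U\<close> _ ax] b(2) by blast
  next
    fix a assume "a \<in> {a \<in> phi0 U phi A. \<forall>x \<in> phi0 U phi A. a \<in> phi {x} \<longrightarrow> x = a}"
    then have a: "a \<in> phi0 U phi A" and maximal: "\<forall>x \<in> phi0 U phi A. a \<in> phi {x} \<longrightarrow> x = a"
      by blast+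
    obtain b where b: "b \<in> A" "a \<in> phi {b}" using a unfolding phi0_A by blast
    then have "b = a" using maximal A_phi0 by blast
    then show "a \<in> A" using b(1) by blast
  qed
qed

lemma min_gen_eq_if_phi0_eq:
  assumes "closure_op U phi" and "standard_op U phi"
    and "min_gen U phi c A" and "min_gen U phi c B" and "phi0 U phi A = phi0 U phi B"
  shows "A = B"
proof -
  have "A = {a \<in> phi0 U phi B. \<forall>x \<in> phi0 U phi B. a \<in> phi {x} \<longrightarrow> x = a}"
    using min_gen_eq_maximal_phi0[OF assms(1-3)] unfolding assms(5) .
  also have "\<dots> = B" using min_gen_eq_maximal_phi0[OF assms(1,2,4)] by (rule sym)
  finally show ?thesis .
qed

lemma min_D_gen_if_least_phi0:
  assumes cl: "closure_op U phi" and st: "standard_op U phi" and fin: "finite U"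
    and Y: "phi0 U phi Y \<subseteq> Y" "c \<notin> Y"
    and A: "min_gen U phi c A" "A \<subseteq> Y"
    and least: "\<And>B. min_gen U phi c B \<Longrightarrow> B \<subseteq> Y \<Longrightarrow> card (phi0 U phi A) \<le> card (phi0 U phi B)"
  shows "min_D_gen U phi c A"
proof -
  have AU: "A \<subseteq> U" using A unfolding min_gen_def by blast
  have "A \<subseteq> phi0 U phi Y" using A(2) phi0_extensive[of Y] by blast
  then have phi0_A: "phi0 U phi A \<subseteq> Y" using phi0_subset_phi0 Y(1) by blast
  then have c_notin: "c \<notin> phi0 U phi A" using Y(2) by blast
  have "finite A" using AU fin by (rule finite_subset)
  moreover have "A \<noteq> {}" using A(1) standard_op_empty[OF cl st] unfolding min_gen_def by auto
  moreover have "card A \<noteq> 1"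
  proof
    assume "card A = 1"
    then obtain a where "A = {a}" by (auto simp: card_1_singleton_iff)
    then show False using c_notin A(1) phi0_eq_UN[OF cl AU] unfolding min_gen_def by simp
  qed
  ultimately have "card A \<ge> 2" using card_gt_0_iff[of A] by linarith
  moreover have "B = A" if B: "min_gen U phi c B" "B \<subseteq> phi0 U phi A" for B
  proof -
    have sub: "phi0 U phi B \<subseteq> phi0 U phi A" using B(2) by (rule phi0_subset_phi0)
    have "finite (phi0 U phi A)" using phi0_range[OF AU] fin by (rule finite_subset)
    moreover have "B \<subseteq> Y" using B(2) phi0_A by blast
    ultimately have "phi0 U phi B = phi0 U phi A"
      using card_seteq sub least[OF B(1)] by blast
    then show ?thesis by (rule min_gen_eq_if_phi0_eq[OF cl st B(1) A(1)])
  qed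
  ultimately show ?thesis using A(1) c_notin unfolding min_D_gen_def by blast
qed

definition sound_basis :: "'a set \<Rightarrow> ('a set \<Rightarrow> 'a set) \<Rightarrow> 'a unit_impl set \<Rightarrow> bool" where
  "sound_basis U phi S \<longleftrightarrow> (\<forall>(A, c) \<in> S. A \<subseteq> U \<and> c \<in> phi A)"

lemma sound_basis_canonical_direct_unit_basis:
  "sound_basis U phi (canonical_direct_unit_basis U phi)"
  unfolding sound_basis_def canonical_direct_unit_basis_def min_gen_def by blast

lemma sound_basis_D_basis: "sound_basis U phi (D_basis U phi)"
  unfolding sound_basis_def D_basis_def sigma0_def min_D_gen_def min_gen_def by blast

lemma merged_form_sound:
  assumes "merged_form S Ss" and "sound_basis U phi S" and "(A, B) \<in> Ss"
  shows "A \<subseteq> U" and "B \<subseteq> phi A"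
  using assms unfolding merged_form_def sound_basis_def by fast+

lemma WCD_eq_single_pass:
  assumes "\<And>A B. (A, B) \<in> Ss \<Longrightarrow> A \<subseteq> U"
  shows "WCD U Y Ss = Y \<union> \<Union>{B. \<exists>A. (A, B) \<in> Ss \<and> A \<subseteq> Y}"
proof -
  have "(A, B) \<notin> (\<Union>m \<in> U - Y. impl_list Ss m) \<longleftrightarrow> A \<subseteq> Y" if "(A, B) \<in> Ss" for A B
    using that assms[OF that] by (auto simp: impl_list_def)
  then have "(\<exists>A. (A, B) \<in> Ss - (\<Union>m \<in> U - Y. impl_list Ss m)) \<longleftrightarrow> (\<exists>A. (A, B) \<in> Ss \<and> A \<subseteq> Y)"
    for B by (metis DiffD1 DiffD2 DiffI)
  then show ?thesis unfolding WCD_def Let_def by simp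
qed

lemma WCD_subset_imp_closure:
  assumes "\<And>A B. (A, B) \<in> Ss \<Longrightarrow> A \<subseteq> U"
  shows "WCD U Y Ss \<subseteq> imp_closure Ss Y"
proof -
  have "B \<subseteq> imp_closure Ss Y" if "(A, B) \<in> Ss" "A \<subseteq> Y" for A B
    using that(1) order_trans[OF that(2) imp_closure_subset] by (rule imp_closure_closed)
  then show ?thesis
    using WCD_eq_single_pass[of Ss U Y] assms imp_closure_subset[of Y Ss] by auto
qed

lemma imp_closure_subset_phi:
  assumes cl: "closure_op U phi" and "Y \<subseteq> U"
    and rhs: "\<And>A B. (A, B) \<in> Ss \<Longrightarrow> B \<subseteq> phi A"
  shows "imp_closure Ss Y \<subseteq> phi Y"
proof (rule imp_closure_least)
  show "Y \<subseteq> phi Y" using closure_op_extensive[OF cl \<open>Y \<subseteq> U\<close>] .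
  show "\<forall>(A, B) \<in> Ss. A \<subseteq> phi Y \<longrightarrow> B \<subseteq> phi Y"
    using rhs closure_op_subset_closure[OF cl \<open>Y \<subseteq> U\<close>] by blast
qed

lemma WCD_subset_input: "Y \<subseteq> WCD U Y Ss"
  unfolding WCD_def Let_def by blast

lemma conclusion_in_WCD:
  assumes "merged_form S Ss" and "(A, c) \<in> S" and "A \<subseteq> Y"
  shows "c \<in> WCD U Y Ss"
proof -
  obtain C where "(A, C) \<in> Ss" "c \<in> C" using assms(1,2) unfolding merged_form_def by blast
  then show ?thesis using assms(3) unfolding WCD_def impl_list_def Let_def by blast
qed

lemma WCD_eq_imp_closure_if_generated:
  assumes cl: "closure_op U phi" and Y: "Y \<subseteq> U"
    and S: "sound_basis U phi S" "merged_form S Ss"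
    and generated: "\<And>c. c \<in> phi Y \<Longrightarrow> c \<notin> Y \<Longrightarrow> \<exists>A \<subseteq> Y. (A, c) \<in> S"
  shows "WCD U Y Ss = imp_closure Ss Y"
proof -
  have lhs: "A \<subseteq> U" and rhs: "B \<subseteq> phi A" if "(A, B) \<in> Ss" for A B
    using merged_form_sound[OF S(2,1) that] by blast+
  have WCD_closure: "WCD U Y Ss \<subseteq> imp_closure Ss Y"
    by (rule WCD_subset_imp_closure) (rule lhs)
  have "imp_closure Ss Y \<subseteq> phi Y"
    using rhs by (rule imp_closure_subset_phi[OF cl Y])
  also have "phi Y \<subseteq> WCD U Y Ss"
  proof
    fix c assume c: "c \<in> phi Y"
    show "c \<in> WCD U Y Ss"
    proof (cases "c \<in> Y")
      case True
      with WCD_subset_input show ?thesis by (rule subsetD)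
    next
      case False
      then obtain A where "(A, c) \<in> S" "A \<subseteq> Y" using generated[OF c] by blast
      then show ?thesis by (rule conclusion_in_WCD[OF S(2)])
    qed
  qed
  finally show ?thesis by (rule subset_antisym[OF WCD_closure])
qed

lemma canonical_direct_unit_basis_generates:
  assumes fin: "finite U" and cl: "closure_op U phi" and Y: "Y \<subseteq> U"
    and c: "c \<in> phi Y" "c \<notin> Y"
  shows "\<exists>A \<subseteq> Y. (A, c) \<in> canonical_direct_unit_basis U phi"
proof -
  obtain A where "A \<subseteq> Y" "min_gen U phi c A" using min_gen_exists[where phi = phi, OF fin Y c] by blast
  moreover have "c \<in> U" using c closure_op_range[OF cl Y] by blast
  ultimately show ?thesis unfolding canonical_direct_unit_basis_def by blast
qed

lemma D_basis_generates:
  assumes cl: "closure_op U phi" and st: "standard_op U phi" and fin: "finite U"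
    and Y: "Y \<subseteq> U" "phi0 U phi Y \<subseteq> Y" and c: "c \<in> phi Y" "c \<notin> Y"
  shows "\<exists>A \<subseteq> Y. (A, c) \<in> D_basis U phi"
proof -
  obtain A0 where "min_gen U phi c A0 \<and> A0 \<subseteq> Y"
    using min_gen_exists[where phi = phi, OF fin Y(1) c] by blast
  then obtain A where A: "min_gen U phi c A" "A \<subseteq> Y"
    and least: "\<And>B. min_gen U phi c B \<Longrightarrow> B \<subseteq> Y \<Longrightarrow> card (phi0 U phi A) \<le> card (phi0 U phi B)"
    using ex_has_least_nat[of "\<lambda>A. min_gen U phi c A \<and> A \<subseteq> Y" A0 "\<lambda>A. card (phi0 U phi A)"]
    by auto
  have "min_D_gen U phi c A" using min_D_gen_if_least_phi0[OF cl st fin Y(2) c(2) A least] .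
  moreover have "c \<in> U" using c closure_op_range[OF cl Y(1)] by blast
  ultimately show ?thesis using A(2) unfolding D_basis_def by blast
qed

theorem proposition3:
  fixes U :: "'a set" and phi :: "'a set \<Rightarrow> 'a set" and X :: "'a set"
  assumes "finite U" and "closure_op U phi" and "standard_op U phi" and "X \<subseteq> U"
  shows "(\<forall>Ss. merged_form (canonical_direct_unit_basis U phi) Ss \<longrightarrow>
            WCD U X Ss = imp_closure Ss X)
       \<and> (\<forall>Ss. merged_form (D_basis U phi) Ss \<longrightarrow>
            WCD U (phi0 U phi X) Ss = imp_closure Ss (phi0 U phi X))"
proof (intro conjI allI impI)
  fix Ss assume merged: "merged_form (canonical_direct_unit_basis U phi) Ss"
  show "WCD U X Ss = imp_closure Ss X"
    using canonical_direct_unit_basis_generates[OF assms(1,2,4)]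
    by (rule WCD_eq_imp_closure_if_generated[OF assms(2,4) sound_basis_canonical_direct_unit_basis merged])
next
  fix Ss assume merged: "merged_form (D_basis U phi) Ss"
  let ?Y = "phi0 U phi X"
  have Y: "?Y \<subseteq> U" using assms(4) by (rule phi0_range)
  have closed: "phi0 U phi ?Y \<subseteq> ?Y" by (rule phi0_subset_phi0) (rule subset_refl)
  show "WCD U ?Y Ss = imp_closure Ss ?Y"
    using D_basis_generates[OF assms(2,3,1) Y closed]
    by (rule WCD_eq_imp_closure_if_generated[OF assms(2) Y sound_basis_D_basis merged])
qed

end
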